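(* Let $n\ge4$, $x_1,\dots,x_{n-1}>0$, $\gamma,\delta>0$ with $\gamma\ne1\ne\delta$, $x_0=1$, and let $\mathbf{P}$ be the $n\times n$ matrix with entries $p_{ij}=x_{j-1}/x_{i-1}$ except $p_{12}=\delta x_1$, $p_{21}=1/(\delta x_1)$, $p_{13}=\gamma x_2$, $p_{31}=1/(\gamma x_2)$. Let $\mathbf{w}^{EM}$ be the principal right eigenvector of $\mathbf{P}$. If $\gamma,\delta>1$, then $w_1^{EM}/w_i^{EM}>x_{i-1}$ for $i=4,\dots,n$.
   Context: The principal right eigenvector is the positive (Perron) eigenvector belonging to the largest eigenvalue. *)

theory Defs
  imports Complex_Main
begin

text \<open>Square matrices of size n are represented as functions nat => nat => real,
  with indices ranging over 1..n (as in the paper). Vectors are nat => _ with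
  entries indexed by 1..n.\<close>

definition EM_matrix :: "real \<Rightarrow> real \<Rightarrow> (nat \<Rightarrow> real) \<Rightarrow> nat \<Rightarrow> nat \<Rightarrow> real" where
  "EM_matrix \<gamma> \<delta> x i j =
     (if i = 1 \<and> j = 2 then \<delta> * x 1
      else if i = 2 \<and> j = 1 then 1 / (\<delta> * x 1)
      else if i = 1 \<and> j = 3 then \<gamma> * x 2
      else if i = 3 \<and> j = 1 then 1 / (\<gamma> * x 2)
      else x (j - 1) / x (i - 1))"

definition is_eigenvalue :: "nat \<Rightarrow> (nat \<Rightarrow> nat \<Rightarrow> real) \<Rightarrow> complex \<Rightarrow> bool" where
  "is_eigenvalue n A \<mu> \<longleftrightarrow>
     (\<exists>v :: nat \<Rightarrow> complex. (\<exists>i\<in>{1..n}. v i \<noteq> 0) \<and>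
        (\<forall>i\<in>{1..n}. (\<Sum>j=1..n. complex_of_real (A i j) * v j) = \<mu> * v i))"

definition principal_right_eigenvector :: "nat \<Rightarrow> (nat \<Rightarrow> nat \<Rightarrow> real) \<Rightarrow> (nat \<Rightarrow> real) \<Rightarrow> bool" where
  "principal_right_eigenvector n A w \<longleftrightarrow>
     (\<exists>r::real.
        (\<forall>i\<in>{1..n}. w i > 0) \<and>
        (\<forall>i\<in>{1..n}. (\<Sum>j=1..n. A i j * w j) = r * w i) \<and>
        (\<forall>\<mu>. is_eigenvalue n A \<mu> \<longrightarrow> cmod \<mu> \<le> r))"

end

theory Submission
  imports Defs
begin

text \<open>For the consistent matrix with entries x_(j-1)/x_(i-1), row i applied to w equals
  T / x_(i-1) with T = \<Sum>j x_(j-1) w_j. The perturbation leaves rows 4..n untouched, so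
  r x_(i-1) w_i = T for the Perron root r, while it only enlarges row 1:
  r w_1 = T + (\<delta> - 1) x_1 w_2 + (\<gamma> - 1) x_2 w_3 > T. Comparing the two gives
  w_1 > x_(i-1) w_i.\<close>

lemma sum_atLeast1_atMost_split3:
  fixes f :: "nat \<Rightarrow> 'a::comm_monoid_add"
  assumes "n \<ge> 3"
  shows "(\<Sum>j=1..n. f j) = f 1 + f 2 + f 3 + (\<Sum>j=4..n. f j)"
proof -
  have "(\<Sum>j=1..n. f j) = f 1 + (\<Sum>j=2..n. f j)"
    using assms by (subst sum.atLeast_Suc_atMost) (auto simp: numeral_2_eq_2)
  also have "(\<Sum>j=2..n. f j) = f 2 + (\<Sum>j=3..n. f j)"
    using assms by (subst sum.atLeast_Suc_atMost) (auto simp: eval_nat_numeral)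
  also have "(\<Sum>j=3..n. f j) = f 3 + (\<Sum>j=4..n. f j)"
    using assms by (subst sum.atLeast_Suc_atMost) (auto simp: eval_nat_numeral)
  finally show ?thesis by (simp add: add.assoc)
qed

lemma EM_matrix_row_sum_unperturbed:
  assumes "i \<ge> 4"
  shows "(\<Sum>j=1..n. EM_matrix \<gamma> \<delta> x i j * w j) = (\<Sum>j=1..n. x (j - 1) * w j) / x (i - 1)"
  unfolding sum_divide_distrib
  by (rule sum.cong) (use assms in \<open>auto simp: EM_matrix_def\<close>)

lemma EM_matrix_first_row_sum:
  assumes "n \<ge> 3" and "x 0 = 1"
  shows "(\<Sum>j=1..n. EM_matrix \<gamma> \<delta> x 1 j * w j)
    = (\<Sum>j=1..n. x (j - 1) * w j) + (\<delta> - 1) * x 1 * w 2 + (\<gamma> - 1) * x 2 * w 3"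
proof -
  have "(\<Sum>j=1..n. EM_matrix \<gamma> \<delta> x 1 j * w j)
      = w 1 + \<delta> * x 1 * w 2 + \<gamma> * x 2 * w 3 + (\<Sum>j=4..n. x (j - 1) * w j)"
    using assms by (subst sum_atLeast1_atMost_split3) (auto simp: EM_matrix_def intro!: sum.cong)
  moreover have "(\<Sum>j=1..n. x (j - 1) * w j)
      = w 1 + x 1 * w 2 + x 2 * w 3 + (\<Sum>j=4..n. x (j - 1) * w j)"
    using assms by (subst sum_atLeast1_atMost_split3) auto
  ultimately show ?thesis by (simp add: algebra_simps)
qed

lemma shifted_weighted_sum_pos:
  fixes x w :: "nat \<Rightarrow> real"
  assumes "n \<ge> 1" and "x 0 > 0" and "\<forall>k\<in>{1..n-1}. x k > 0" and "\<forall>j\<in>{1..n}. w j > 0"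
  shows "(\<Sum>j=1..n. x (j - 1) * w j) > 0"
proof (rule sum_pos)
  fix j assume j: "j \<in> {1..n}"
  then have "j = 1 \<or> j - 1 \<in> {1..n-1}"
    by auto
  then have "x (j - 1) > 0"
    using assms(2,3) by auto
  then show "x (j - 1) * w j > 0"
    using assms(4) j by simp
qed (use assms(1) in auto)

theorem mainTheorem7:
  fixes n :: nat and x :: "nat \<Rightarrow> real" and \<gamma> \<delta> :: real and w :: "nat \<Rightarrow> real"
  assumes "n \<ge> 4"
    and "\<forall>k\<in>{1..n-1}. x k > 0"
    and "x 0 = 1"
    and "\<gamma> > 0" and "\<delta> > 0" and "\<gamma> \<noteq> 1" and "\<delta> \<noteq> 1"
    and "principal_right_eigenvector n (EM_matrix \<gamma> \<delta> x) w"
    and "\<gamma> > 1" and "\<delta> > 1"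
  shows "\<forall>i\<in>{4..n}. w 1 / w i > x (i - 1)"
proof
  fix i assume i: "i \<in> {4..n}"
  obtain r where pos: "\<forall>j\<in>{1..n}. w j > 0"
    and eigen: "\<forall>j\<in>{1..n}. (\<Sum>k=1..n. EM_matrix \<gamma> \<delta> x j k * w k) = r * w j"
    using assms(8) unfolding principal_right_eigenvector_def by blast
  define T where "T = (\<Sum>j=1..n. x (j - 1) * w j)"
  have "i - 1 \<in> {1..n-1}"
    using i by auto
  then have xi: "x (i - 1) > 0" and wi: "w i > 0"
    using assms(2) pos i by auto
  have T_pos: "T > 0"
    unfolding T_def using assms(1-3) pos by (intro shifted_weighted_sum_pos) auto
  have row_i: "r * w i = T / x (i - 1)"
    using eigen i EM_matrix_row_sum_unperturbed[of i \<gamma> \<delta> x w n] unfolding T_def by auto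
  have perturbation_pos: "(\<delta> - 1) * x 1 * w 2 + (\<gamma> - 1) * x 2 * w 3 > 0"
    using assms(1,2,9,10) pos by (intro add_pos_pos mult_pos_pos) auto
  have row_1: "r * w 1 > T"
    using eigen EM_matrix_first_row_sum[of n x \<gamma> \<delta> w] assms(1,3) perturbation_pos
    unfolding T_def by auto
  have T_eq: "T = r * (x (i - 1) * w i)"
    using row_i xi by (simp add: field_simps)
  then have "r > 0"
    using T_pos xi wi by (metis mult_pos_pos zero_less_mult_pos2)
  then have "w 1 > x (i - 1) * w i"
    using row_1 T_eq by simp
  then show "w 1 / w i > x (i - 1)"
    using wi by (simp add: pos_less_divide_eq)
qed

end
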